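(* Let $(R,[\cdot_\lambda\cdot],\alpha,\beta)$ be a BiHom-Lie conformal superalgebra and let $k\geq 0$ be an integer. Then $(R,[\cdot_\lambda\cdot]',\alpha^{k+1},\beta^{k+1})$, where $[a_\lambda b]'=[\alpha^k(a)_\lambda\beta^k(b)]$, is a BiHom-Lie conformal superalgebra.
   Context: All spaces are over $\mathbb{C}$. For a $\mathbb{C}[\partial]$-module $V$, $V[\lambda]=\mathbb{C}[\lambda]\otimes V$. $|a|$ denotes the parity of a homogeneous element. In $[x_{-\lambda-\partial}y]$ one writes $[x_\lambda y]=\sum_n\lambda^nc_n$ and replaces $\lambda$ by $-\lambda-\partial$, $\partial$ acting on the $c_n$. A BiHom-Lie conformal superalgebra $(R,[\cdot_\lambda\cdot],\alpha,\beta)$ is a $\mathbb{Z}_2$-graded $\mathbb{C}[\partial]$-module $R=R_0\oplus R_1$ with two commuting linear maps $\alpha,\beta:R\to R$ and a $\mathbb{C}$-linear map $R\otimes R\to R[\lambda]$, $a\otimes b\mapsto[a_\lambda b]$, with $[R_{i\,\lambda}R_j]\subseteq R_{i+j}[\lambda]$, such that for all homogeneous $a,b,c\in R$: (1) $\alpha\partial=\partial\alpha$, $\beta\partial=\partial\beta$; (2) $\alpha([a_\lambda b])=[\alpha(a)_\lambda\alpha(b)]$, $\beta([a_\lambda b])=[\beta(a)_\lambda\beta(b)]$; (3) $[(\partial a)_\lambda b]=-\lambda[a_\lambda b]$, $[a_\lambda(\partial b)]=(\partial+\lambda)[a_\lambda b]$; (4) $[\beta(a)_\lambda\alpha(b)]=-(-1)^{|a||b|}[\beta(b)_{-\lambda-\partial}\alpha(a)]$;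 (5) $[\alpha\beta(a)_\lambda[b_\mu c]]=[[\beta(a)_\lambda b]_{\lambda+\mu}\beta(c)]+(-1)^{|a||b|}[\beta(b)_\mu[\alpha(a)_\lambda c]]$. *)

theory Defs
  imports Complex_Main
begin

(* Conventions.
   * The underlying space R is a type 'a with an abelian group structure and an
     explicit complex scalar multiplication smul, required to form a C-vector space.
   * The partial derivative d is a C-linear map (C[d]-module structure).
   * The Z2-grading R = R0 (+) R1 is given by two subspaces; "grade R0 R1 i" is
     R0 for even i and R1 for odd i; homogeneous of parity i (i<2) means in grade i.
   * A lambda-bracket [a_lam b] = sum_n lam^n c_n in R[lam] is encoded by its
     coefficient function  br a b :: nat => 'a  (br a b n = c_n), of finite support. *)

definition grade :: "'a set \<Rightarrow> 'a set \<Rightarrow> nat \<Rightarrow> 'a set" where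
  "grade R0 R1 i = (if even i then R0 else R1)"

(* coefficients of lam * p, for p given by coefficients c *)
definition lam_mul :: "(nat \<Rightarrow> 'a::zero) \<Rightarrow> nat \<Rightarrow> 'a" where
  "lam_mul c n = (case n of 0 \<Rightarrow> 0 | Suc m \<Rightarrow> c m)"

(* coefficients (in lam) of  sum_n (-lam-d)^n c_n
   = sum_n (-1)^n sum_j (n choose j) lam^j d^(n-j) c_n *)
definition subst_neg :: "(complex \<Rightarrow> 'a \<Rightarrow> 'a) \<Rightarrow> ('a \<Rightarrow> 'a) \<Rightarrow> (nat \<Rightarrow> 'a::ab_group_add)
    \<Rightarrow> nat \<Rightarrow> 'a" where
  "subst_neg smul d c j =
     (\<Sum>n\<in>{n. c n \<noteq> 0}. smul ((-1) ^ n * of_nat (n choose j)) ((d ^^ (n - j)) (c n)))"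

definition BiHomLieConfSuper ::
  "(complex \<Rightarrow> 'a \<Rightarrow> 'a) \<Rightarrow> ('a \<Rightarrow> 'a) \<Rightarrow> 'a set \<Rightarrow> 'a set
   \<Rightarrow> ('a \<Rightarrow> 'a \<Rightarrow> nat \<Rightarrow> 'a::ab_group_add) \<Rightarrow> ('a \<Rightarrow> 'a) \<Rightarrow> ('a \<Rightarrow> 'a) \<Rightarrow> bool" where
  "BiHomLieConfSuper smul d R0 R1 br al be \<longleftrightarrow>
     \<comment> \<open>C-vector space, C[d]-module, Z2-grading\<close>
     vector_space smul \<and>
     Vector_Spaces.linear smul smul d \<and>
     module.subspace smul R0 \<and> module.subspace smul R1 \<and>
     R0 \<inter> R1 = {0} \<and> (\<forall>x. \<exists>y\<in>R0. \<exists>z\<in>R1. x = y + z) \<and>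
     d ` R0 \<subseteq> R0 \<and> d ` R1 \<subseteq> R1 \<and>
     \<comment> \<open>alpha, beta: commuting linear maps, even (parity preserving)\<close>
     Vector_Spaces.linear smul smul al \<and> Vector_Spaces.linear smul smul be \<and>
     al \<circ> be = be \<circ> al \<and>
     al ` R0 \<subseteq> R0 \<and> al ` R1 \<subseteq> R1 \<and> be ` R0 \<subseteq> R0 \<and> be ` R1 \<subseteq> R1 \<and>
     \<comment> \<open>lambda-bracket: C-bilinear, values in R[lambda], respects grading\<close>
     (\<forall>a b. finite {n. br a b n \<noteq> 0}) \<and>
     (\<forall>b n. Vector_Spaces.linear smul smul (\<lambda>a. br a b n)) \<and>
     (\<forall>a n. Vector_Spaces.linear smul smul (\<lambda>b. br a b n)) \<and>
     (\<forall>i j a b n. i < 2 \<longrightarrow> j < 2 \<longrightarrow> a \<in> grade R0 R1 i \<longrightarrow> b \<in> grade R0 R1 j \<longrightarrow>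
         br a b n \<in> grade R0 R1 (i + j)) \<and>
     \<comment> \<open>(1)\<close>
     al \<circ> d = d \<circ> al \<and> be \<circ> d = d \<circ> be \<and>
     \<comment> \<open>(2)\<close>
     (\<forall>a b n. al (br a b n) = br (al a) (al b) n \<and> be (br a b n) = br (be a) (be b) n) \<and>
     \<comment> \<open>(3)\<close>
     (\<forall>a b n. br (d a) b n = - lam_mul (br a b) n \<and>
              br a (d b) n = d (br a b n) + lam_mul (br a b) n) \<and>
     \<comment> \<open>(4) skew-symmetry, for homogeneous a, b\<close>
     (\<forall>i j a b n. i < 2 \<longrightarrow> j < 2 \<longrightarrow> a \<in> grade R0 R1 i \<longrightarrow> b \<in> grade R0 R1 j \<longrightarrow>
         br (be a) (al b) n = smul (- ((-1) ^ (i * j))) (subst_neg smul d (br (be b) (al a)) n)) \<and>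
     \<comment> \<open>(5) Jacobi identity, compared coefficientwise at lambda^n mu^m\<close>
     (\<forall>i j a b c n m. i < 2 \<longrightarrow> j < 2 \<longrightarrow> a \<in> grade R0 R1 i \<longrightarrow> b \<in> grade R0 R1 j \<longrightarrow>
         br (al (be a)) (br b c m) n =
           (\<Sum>r\<le>n. smul (of_nat ((m + r) choose m)) (br (br (be a) b (n - r)) (be c) (m + r)))
           + smul ((-1) ^ (i * j)) (br (be b) (br (al a) c n) m))"

end

theory Submission
  imports Defs
begin

text \<open>The iterates of \<open>\<alpha>\<close> and \<open>\<beta>\<close> are again even linear maps commuting with each other and
  with \<open>\<partial>\<close>, and they are morphisms of the bracket. Hence every occurrence of \<open>\<alpha>\<^sup>k\<close>, \<open>\<beta>\<^sup>k\<close> in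
  the twisted axioms can be pushed into the arguments: skew-symmetry for \<open>a, b\<close> becomes the
  original skew-symmetry for \<open>\<alpha>\<^sup>k\<beta>\<^sup>k a, \<alpha>\<^sup>k\<beta>\<^sup>k b\<close>, and the Jacobi identity for \<open>a, b, c\<close> becomes
  the original one for \<open>\<alpha>\<^sup>2\<^sup>k\<beta>\<^sup>k a, \<alpha>\<^sup>k\<beta>\<^sup>k b, \<beta>\<^sup>2\<^sup>k c\<close>.\<close>

lemma linear_funpow:
  assumes "vector_space s" and "Vector_Spaces.linear s s f"
  shows "Vector_Spaces.linear s s (f ^^ n)"
proof (induction n)
  case 0
  then show ?case using vector_space.linear_id[OF assms(1)] by (simp add: id_def)
next
  case (Suc n)
  then show ?case unfolding funpow.simps by (rule Vector_Spaces.linear_compose[OF _ assms(2)])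
qed

lemma funpow_comp_commute:
  assumes "f \<circ> g = g \<circ> f"
  shows "(f ^^ n) \<circ> g = g \<circ> (f ^^ n)"
proof -
  have "(f ^^ n) (g x) = g ((f ^^ n) x)" for x
    using assms by (induction n) (simp_all add: fun_eq_iff)
  then show ?thesis by (simp add: fun_eq_iff)
qed

lemma funpow_funpow_comp_commute:
  assumes "f \<circ> g = g \<circ> f"
  shows "(f ^^ n) \<circ> (g ^^ m) = (g ^^ m) \<circ> (f ^^ n)"
  using funpow_comp_commute[OF funpow_comp_commute[OF assms, symmetric]] by simp

lemma funpow_funpow: "(f ^^ m) ((f ^^ n) x) = (f ^^ (m + n)) x"
  by (simp add: funpow_add)

lemma funpow_image_subset:
  assumes "f ` S \<subseteq> S"
  shows "(f ^^ n) ` S \<subseteq> S"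
  using assms by (induction n) auto

lemma funpow_bracket_hom:
  assumes "\<And>a b n. f (br a b n) = br (f a) (f b) n"
  shows "(f ^^ p) (br a b n) = br ((f ^^ p) a) ((f ^^ p) b) n"
  using assms by (induction p) simp_all

locale bihom_lie_conf_superalgebra =
  fixes smul :: "complex \<Rightarrow> 'a::ab_group_add \<Rightarrow> 'a"
    and d :: "'a \<Rightarrow> 'a"
    and R0 R1 :: "'a set"
    and br :: "'a \<Rightarrow> 'a \<Rightarrow> nat \<Rightarrow> 'a"
    and al be :: "'a \<Rightarrow> 'a"
  assumes bihom: "BiHomLieConfSuper smul d R0 R1 br al be"
begin

lemma
  shows vector_space: "vector_space smul"
    and d_linear: "Vector_Spaces.linear smul smul d"
    and R0_subspace: "module.subspace smul R0"
    and R1_subspace: "module.subspace smul R1"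
    and grades_disjoint: "R0 \<inter> R1 = {0}"
    and grades_span: "\<exists>y\<in>R0. \<exists>z\<in>R1. x = y + z"
    and d_even: "d ` R0 \<subseteq> R0" "d ` R1 \<subseteq> R1"
    and al_linear: "Vector_Spaces.linear smul smul al"
    and be_linear: "Vector_Spaces.linear smul smul be"
    and al_be_commute: "al \<circ> be = be \<circ> al"
    and al_even: "al ` R0 \<subseteq> R0" "al ` R1 \<subseteq> R1"
    and be_even: "be ` R0 \<subseteq> R0" "be ` R1 \<subseteq> R1"
    and bracket_finite_support: "finite {n. br a b n \<noteq> 0}"
    and bracket_linear_left: "Vector_Spaces.linear smul smul (\<lambda>a. br a b n)"
    and bracket_linear_right: "Vector_Spaces.linear smul smul (\<lambda>b. br a b n)"
    and bracket_grade: "\<lbrakk>i < 2; j < 2; a \<in> grade R0 R1 i; b \<in> grade R0 R1 j\<rbrakk>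
      \<Longrightarrow> br a b n \<in> grade R0 R1 (i + j)"
    and al_d_commute: "al \<circ> d = d \<circ> al"
    and be_d_commute: "be \<circ> d = d \<circ> be"
    and al_bracket: "al (br a b n) = br (al a) (al b) n"
    and be_bracket: "be (br a b n) = br (be a) (be b) n"
    and bracket_d_left: "br (d a) b n = - lam_mul (br a b) n"
    and bracket_d_right: "br a (d b) n = d (br a b n) + lam_mul (br a b) n"
    and skew_symmetry: "\<lbrakk>i < 2; j < 2; a \<in> grade R0 R1 i; b \<in> grade R0 R1 j\<rbrakk>
      \<Longrightarrow> br (be a) (al b) n = smul (- ((-1) ^ (i * j))) (subst_neg smul d (br (be b) (al a)) n)"
    and jacobi: "\<lbrakk>i < 2; j < 2; a \<in> grade R0 R1 i; b \<in> grade R0 R1 j\<rbrakk>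
      \<Longrightarrow> br (al (be a)) (br b c m) n =
           (\<Sum>r\<le>n. smul (of_nat ((m + r) choose m)) (br (br (be a) b (n - r)) (be c) (m + r)))
           + smul ((-1) ^ (i * j)) (br (be b) (br (al a) c n) m)"
  by (insert bihom, unfold BiHomLieConfSuper_def) (elim conjE, (assumption | meson))+

lemma al_pow_grade: "x \<in> grade R0 R1 i \<Longrightarrow> (al ^^ p) x \<in> grade R0 R1 i"
  using funpow_image_subset[OF al_even(1)] funpow_image_subset[OF al_even(2)]
  by (auto simp: grade_def image_subset_iff)

lemma be_pow_grade: "x \<in> grade R0 R1 i \<Longrightarrow> (be ^^ p) x \<in> grade R0 R1 i"
  using funpow_image_subset[OF be_even(1)] funpow_image_subset[OF be_even(2)]
  by (auto simp: grade_def image_subset_iff)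

lemma al_be_pow_comp_commute: "(al ^^ p) \<circ> (be ^^ q) = (be ^^ q) \<circ> (al ^^ p)"
  by (rule funpow_funpow_comp_commute[OF al_be_commute])

lemma al_pow_d_comp_commute: "(al ^^ p) \<circ> d = d \<circ> (al ^^ p)"
  by (rule funpow_comp_commute[OF al_d_commute])

lemma be_pow_d_comp_commute: "(be ^^ p) \<circ> d = d \<circ> (be ^^ p)"
  by (rule funpow_comp_commute[OF be_d_commute])

lemma al_be_pow_commute: "(al ^^ p) ((be ^^ q) x) = (be ^^ q) ((al ^^ p) x)"
  by (rule comp_eq_dest[OF al_be_pow_comp_commute])

lemma al_pow_be: "(al ^^ p) (be x) = be ((al ^^ p) x)"
  by (rule comp_eq_dest[OF funpow_comp_commute[OF al_be_commute]])

lemma be_pow_al: "(be ^^ p) (al x) = al ((be ^^ p) x)"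
  by (rule comp_eq_dest[OF funpow_comp_commute[OF al_be_commute[symmetric]]])

lemma al_pow_d: "(al ^^ p) (d x) = d ((al ^^ p) x)"
  by (rule comp_eq_dest[OF al_pow_d_comp_commute])

lemma be_pow_d: "(be ^^ p) (d x) = d ((be ^^ p) x)"
  by (rule comp_eq_dest[OF be_pow_d_comp_commute])

lemma al_pow_bracket: "(al ^^ p) (br a b n) = br ((al ^^ p) a) ((al ^^ p) b) n"
  using funpow_bracket_hom[where br = br, OF al_bracket] .

lemma be_pow_bracket: "(be ^^ p) (br a b n) = br ((be ^^ p) a) ((be ^^ p) b) n"
  using funpow_bracket_hom[where br = br, OF be_bracket] .

lemma twisted_bracket_linear_left:
  "Vector_Spaces.linear smul smul (\<lambda>a. br ((al ^^ k) a) ((be ^^ k) b) n)"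
  using Vector_Spaces.linear_compose[OF linear_funpow[OF vector_space al_linear] bracket_linear_left]
  by (simp add: o_def)

lemma twisted_bracket_linear_right:
  "Vector_Spaces.linear smul smul (\<lambda>b. br ((al ^^ k) a) ((be ^^ k) b) n)"
  using Vector_Spaces.linear_compose[OF linear_funpow[OF vector_space be_linear] bracket_linear_right]
  by (simp add: o_def)

lemma twisted_bracket_grade:
  "\<lbrakk>i < 2; j < 2; a \<in> grade R0 R1 i; b \<in> grade R0 R1 j\<rbrakk>
    \<Longrightarrow> br ((al ^^ k) a) ((be ^^ k) b) n \<in> grade R0 R1 (i + j)"
  by (simp add: bracket_grade al_pow_grade be_pow_grade)

lemma al_pow_twisted_bracket:
  "(al ^^ p) (br ((al ^^ k) a) ((be ^^ k) b) n) = br ((al ^^ k) ((al ^^ p) a)) ((be ^^ k) ((al ^^ p) b)) n"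
  by (simp add: al_pow_bracket al_be_pow_commute funpow_funpow add.commute)

lemma be_pow_twisted_bracket:
  "(be ^^ p) (br ((al ^^ k) a) ((be ^^ k) b) n) = br ((al ^^ k) ((be ^^ p) a)) ((be ^^ k) ((be ^^ p) b)) n"
  by (simp add: be_pow_bracket al_be_pow_commute funpow_funpow add.commute)

lemma twisted_bracket_d_left:
  "br ((al ^^ k) (d a)) ((be ^^ k) b) n = - lam_mul (\<lambda>n. br ((al ^^ k) a) ((be ^^ k) b) n) n"
  by (simp add: al_pow_d bracket_d_left)

lemma twisted_bracket_d_right:
  "br ((al ^^ k) a) ((be ^^ k) (d b)) n
    = d (br ((al ^^ k) a) ((be ^^ k) b) n) + lam_mul (\<lambda>n. br ((al ^^ k) a) ((be ^^ k) b) n) n"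
  by (simp add: be_pow_d bracket_d_right)

lemma twisted_skew_symmetry:
  assumes "i < 2" "j < 2" "a \<in> grade R0 R1 i" "b \<in> grade R0 R1 j"
  shows "br ((al ^^ k) ((be ^^ (k + 1)) a)) ((be ^^ k) ((al ^^ (k + 1)) b)) n =
    smul (- ((-1) ^ (i * j)))
      (subst_neg smul d (\<lambda>n. br ((al ^^ k) ((be ^^ (k + 1)) b)) ((be ^^ k) ((al ^^ (k + 1)) a)) n) n)"
proof -
  define X where "X x = (al ^^ k) ((be ^^ k) x)" for x
  have be_X: "(al ^^ k) ((be ^^ (k + 1)) x) = be (X x)" for x
    by (simp add: X_def al_pow_be)
  have al_X: "(be ^^ k) ((al ^^ (k + 1)) x) = al (X x)" for x
    by (simp add: X_def be_pow_al al_be_pow_commute)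
  have "X a \<in> grade R0 R1 i" "X b \<in> grade R0 R1 j"
    using assms by (simp_all add: X_def al_pow_grade be_pow_grade)
  then show ?thesis
    unfolding be_X al_X by (rule skew_symmetry[OF assms(1,2)])
qed

lemma twisted_jacobi:
  assumes "i < 2" "j < 2" "a \<in> grade R0 R1 i" "b \<in> grade R0 R1 j"
  shows "br ((al ^^ k) ((al ^^ (k + 1)) ((be ^^ (k + 1)) a)))
          ((be ^^ k) (br ((al ^^ k) b) ((be ^^ k) c) m)) n =
         (\<Sum>r\<le>n. smul (of_nat ((m + r) choose m))
            (br ((al ^^ k) (br ((al ^^ k) ((be ^^ (k + 1)) a)) ((be ^^ k) b) (n - r)))
              ((be ^^ k) ((be ^^ (k + 1)) c)) (m + r))) +
         smul ((-1) ^ (i * j))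
          (br ((al ^^ k) ((be ^^ (k + 1)) b))
            ((be ^^ k) (br ((al ^^ k) ((al ^^ (k + 1)) a)) ((be ^^ k) c) n)) m)"
proof -
  define a' where "a' = (al ^^ (2 * k)) ((be ^^ k) a)"
  define b' where "b' = (be ^^ k) ((al ^^ k) b)"
  define c' where "c' = (be ^^ (2 * k)) c"
  have "a' \<in> grade R0 R1 i" "b' \<in> grade R0 R1 j"
    using assms by (simp_all add: a'_def b'_def al_pow_grade be_pow_grade)
  have twist: "(al ^^ k) ((al ^^ (k + 1)) ((be ^^ (k + 1)) a)) = al (be a')"
    "(be ^^ k) (br ((al ^^ k) b) ((be ^^ k) c) m) = br b' c' m"
    "(al ^^ k) (br ((al ^^ k) ((be ^^ (k + 1)) a)) ((be ^^ k) b) (n - r)) = br (be a') b' (n - r)"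
    "(be ^^ k) ((be ^^ (k + 1)) c) = be c'"
    "(al ^^ k) ((be ^^ (k + 1)) b) = be b'"
    "(be ^^ k) (br ((al ^^ k) ((al ^^ (k + 1)) a)) ((be ^^ k) c) n) = br (al a') c' n"
    for r by (simp_all add: a'_def b'_def c'_def al_pow_bracket be_pow_bracket al_be_pow_commute
        al_pow_be be_pow_al funpow_funpow funpow_swap1[symmetric] mult_2 add_ac)
  show ?thesis
    unfolding twist by (rule jacobi) fact+
qed

end

theorem mainTheorem3:
  fixes smul :: "complex \<Rightarrow> 'a::ab_group_add \<Rightarrow> 'a"
    and d al be :: "'a \<Rightarrow> 'a"
    and R0 R1 :: "'a set"
    and br :: "'a \<Rightarrow> 'a \<Rightarrow> nat \<Rightarrow> 'a"
    and k :: nat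
  assumes "BiHomLieConfSuper smul d R0 R1 br al be"
  shows "BiHomLieConfSuper smul d R0 R1 (\<lambda>a b. br ((al ^^ k) a) ((be ^^ k) b))
           (al ^^ (k + 1)) (be ^^ (k + 1))"
proof -
  interpret bihom_lie_conf_superalgebra smul d R0 R1 br al be
    by (rule bihom_lie_conf_superalgebra.intro[OF assms])
  show ?thesis
    unfolding BiHomLieConfSuper_def
    by (intro conjI allI impI vector_space d_linear R0_subspace R1_subspace grades_disjoint
        grades_span d_even linear_funpow al_linear be_linear al_be_pow_comp_commute
        funpow_image_subset al_even be_even bracket_finite_support twisted_bracket_linear_left
        twisted_bracket_linear_right twisted_bracket_grade al_pow_d_comp_commute
        be_pow_d_comp_commute al_pow_twisted_bracket be_pow_twisted_bracket
        twisted_bracket_d_left twisted_bracket_d_right twisted_skew_symmetry twisted_jacobi)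
qed

end
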